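(* Fix $\vartheta\in\mathbb{C}$, let $r_1,r_2$ be the two roots (with multiplicity) of $\vartheta-(\mathtt{h}+1)^2$, let $\omega=3+\max(\mathrm{Re}\, r_1,\mathrm{Re}\, r_2)$ and $\mathbb{C}_\omega=\{z\in\mathbb{C}: \mathrm{Re}\,z\in[\omega,\omega+2)\}$. Let $u=c\prod_{t\in\mathbb{C}_\omega}(\mathtt{h}-t)^{\mathtt{m}(t)}\in\mathbb{C}(\mathtt{h})^\times$ with $c\in\mathbb{C}^\times$ and $\mathtt{m}:\mathbb{C}_\omega\to\mathbb{Z}$ of finite support. Then $L_u\cap\mathbb{C}[\mathtt{h}]=\mathbb{C}[\mathtt{h}]$, i.e. the monic generator of the ideal $L_u\cap\mathbb{C}[\mathtt{h}]$ of $\mathbb{C}[\mathtt{h}]$ is $1$, and hence $\mathbb{C}[\mathtt{h}]\subset L_u$.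
   Context: $\mathfrak{g}=\mathfrak{sl}_2(\mathbb{C})$ with basis $\mathtt{e},\mathtt{f},\mathtt{h}$, $[\mathtt{h},\mathtt{e}]=2\mathtt{e}$, $[\mathtt{h},\mathtt{f}]=-2\mathtt{f}$, $[\mathtt{e},\mathtt{f}]=\mathtt{h}$; Casimir element $\mathtt{c}=(\mathtt{h}+1)^2+4\mathtt{f}\mathtt{e}$; $U_\vartheta=U(\mathfrak{g})/U(\mathfrak{g})(\mathtt{c}-\vartheta)$. Let $\Bbbk=\mathbb{C}(\mathtt{h})$, $\sigma$ the automorphism of $\Bbbk$ fixing $\mathbb{C}$ with $\sigma(\mathtt{h})=\mathtt{h}-2$, and $R=\Bbbk[x,x^{-1},\sigma]$ (skew Laurent polynomials: $xr=\sigma(r)x$ for $r\in\Bbbk$). The assignment $\mathtt{e}\mapsto x$, $\mathtt{f}\mapsto\frac{\vartheta-(\mathtt{h}+1)^2}{4}x^{-1}$, $\mathtt{h}\mapsto\mathtt{h}$ gives an injective algebra homomorphism $U_\vartheta\to R$. For $u\in\Bbbk^\times$, $N_u$ is $\Bbbk$ with the $R$-module structure where $\Bbbk$ acts by multiplication and $x\cdot b=\sigma(b)u$; thus as a $U_\vartheta$-module, $\mathtt{h}$ acts by multiplication, $\mathtt{e}\cdot b=\sigma(b)u$ and $\mathtt{f}\cdot b=\frac{\vartheta-(\mathtt{h}+1)^2}{4}\cdot\frac{\sigma^{-1}(b)}{\sigma^{-1}(u)}$. It is known that $N_u$, viewed as a $U_\vartheta$-module, has a unique simple submodule; this is denoted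 $L_u$. *)

theory Defs
  imports Complex_Main "HOL-Computational_Algebra.Polynomial"
    "HOL-Computational_Algebra.Fraction_Field"
    "HOL-Computational_Algebra.Normalized_Fraction"
    "HOL-Computational_Algebra.Polynomial_Factorial"
    "HOL-Computational_Algebra.Field_as_Ring"
begin

text \<open>The field k = C(h) is modelled as the fraction field of complex polynomials,
  the variable h being the polynomial [:0,1:].\<close>

type_synonym ratfun = "complex poly fract"

definition hvar :: ratfun where
  "hvar = Fract [:0, 1:] 1"

definition poly_to_ratfun :: "complex poly \<Rightarrow> ratfun" where
  "poly_to_ratfun p = Fract p 1"

definition const_rf :: "complex \<Rightarrow> ratfun" where
  "const_rf c = Fract [:c:] 1"

definition shift :: "complex \<Rightarrow> ratfun \<Rightarrow> ratfun" where
  "shift a x = (case quot_of_fract x of (p, q) \<Rightarrow>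
      Fract (pcompose p [:a, 1:]) (pcompose q [:a, 1:]))"

definition sigma :: "ratfun \<Rightarrow> ratfun" where
  "sigma = shift (-2)"

definition sigma_inv :: "ratfun \<Rightarrow> ratfun" where
  "sigma_inv = shift 2"

text \<open>Actions of e and f on N_u (h acts by multiplication by hvar).\<close>

definition e_act :: "ratfun \<Rightarrow> ratfun \<Rightarrow> ratfun" where
  "e_act u b = sigma b * u"

definition f_act :: "complex \<Rightarrow> ratfun \<Rightarrow> ratfun \<Rightarrow> ratfun" where
  "f_act theta u b = ((const_rf theta - (hvar + 1)^2) / 4) * (sigma_inv b / sigma_inv u)"

definition is_submodule :: "complex \<Rightarrow> ratfun \<Rightarrow> ratfun set \<Rightarrow> bool" where
  "is_submodule theta u S \<longleftrightarrow>
     0 \<in> S \<and>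
     (\<forall>x\<in>S. \<forall>y\<in>S. x + y \<in> S) \<and>
     (\<forall>c. \<forall>x\<in>S. const_rf c * x \<in> S) \<and>
     (\<forall>x\<in>S. hvar * x \<in> S) \<and>
     (\<forall>x\<in>S. e_act u x \<in> S) \<and>
     (\<forall>x\<in>S. f_act theta u x \<in> S)"

definition is_simple_submodule :: "complex \<Rightarrow> ratfun \<Rightarrow> ratfun set \<Rightarrow> bool" where
  "is_simple_submodule theta u S \<longleftrightarrow>
     is_submodule theta u S \<and> S \<noteq> {0} \<and>
     (\<forall>T. is_submodule theta u T \<and> T \<subseteq> S \<longrightarrow> T = {0} \<or> T = S)"

end

theory Submission
  imports Defs "HOL-Computational_Algebra.Fundamental_Theorem_Algebra"
begin

text \<open>A nonzero submodule S meets \<open>\<complex>[h]\<close> in a nonzero ideal; let g be a polynomial of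
  minimal degree in it. Writing u = A/B and clearing denominators, stability under e and f
  gives g dvd g(h-2)A and g dvd \<phi> g(h+2) B(h+2), with \<phi> = \<vartheta> - (h+1)^2.
  If g had a root, a root z of minimal real part would be a root of A, so Re z \<ge> \<omega>, and a root w
  of maximal real part would be a root of \<phi> or of B(h+2), so Re w < \<omega>: impossible.
  Hence g is constant, 1 \<in> S, and the submodule generated by 1 is the unique simple one.\<close>

lemma pcompose_linear_nonzero: "q \<noteq> 0 \<Longrightarrow> pcompose q [:a, 1 :: 'a :: idom:] \<noteq> 0"
  using pcompose_eq_0_iff[of "[:a, 1:]" q] by simp

lemma shift_Fract:
  assumes "q \<noteq> 0"
  shows "shift a (Fract p q) = Fract (pcompose p [:a, 1:]) (pcompose q [:a, 1:])"
proof -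
  obtain p0 q0 where pq: "quot_of_fract (Fract p q) = (p0, q0)"
    by (cases "quot_of_fract (Fract p q)")
  have "(p0, q0) \<in> normalized_fracts"
    using quot_of_fract_in_normalized_fracts pq by metis
  hence q0: "q0 \<noteq> 0" by (metis not_normalized_fracts_0_denom)
  have "Fract p0 q0 = Fract p q"
    using quot_to_fract_quot_of_fract[of "Fract p q"] pq by (simp add: quot_to_fract_def)
  hence "p0 * q = p * q0" using eq_fract(1)[OF q0 assms] by simp
  hence "pcompose p0 [:a, 1:] * pcompose q [:a, 1:] = pcompose p [:a, 1:] * pcompose q0 [:a, 1:]"
    by (metis pcompose_mult)
  thus ?thesis
    unfolding shift_def pq
    using eq_fract(1)[OF pcompose_linear_nonzero[OF q0] pcompose_linear_nonzero[OF assms]] by simp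
qed

lemma const_rf_numeral: "const_rf (numeral n) = numeral n"
  by (metis const_rf_def of_nat_fract of_nat_numeral of_nat_poly)

lemma Fract_pCons: "Fract (pCons a p) 1 = const_rf a + hvar * Fract (p :: complex poly) 1"
proof -
  have "pCons a p = [:a:] + [:0, 1:] * p"
    by (simp add: poly_eq_iff coeff_pCons split: nat.splits)
  thus ?thesis by (simp add: const_rf_def hvar_def)
qed

lemma Fract_casimir:
  "const_rf theta - (hvar + 1)\<^sup>2 = Fract ([:theta:] - [:1, 1:]\<^sup>2) 1"
proof -
  have "[:0, 1:] + 1 = [:1, 1 :: complex:]" by (simp add: one_pCons)
  thus ?thesis by (simp add: const_rf_def hvar_def One_fract_def power2_eq_square)
qed

lemma linear_factor_powi:
  "(hvar - const_rf t) powi k = Fract ([:-t, 1:] ^ nat k) ([:-t, 1:] ^ nat (-k))"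
proof -
  have Fract_power: "Fract p 1 ^ n = Fract (p ^ n) 1" "Fract 1 p ^ n = Fract 1 (p ^ n)"
    for p :: "complex poly" and n
    by (induction n) (simp_all add: One_fract_def)
  have "hvar - const_rf t = Fract [:-t, 1:] 1" by (simp add: hvar_def const_rf_def)
  thus ?thesis by (simp add: power_int_def Fract_power)
qed

lemma prod_linear_factor_powi:
  assumes "finite F"
  shows "(\<Prod>t\<in>F. (hvar - const_rf t) powi (m t)) =
    Fract (\<Prod>t\<in>F. [:-t, 1:] ^ nat (m t)) (\<Prod>t\<in>F. [:-t, 1:] ^ nat (- m t))"
  using assms
  by (induction F rule: finite_induct) (simp_all add: One_fract_def linear_factor_powi)

lemma poly_prod_linear_factors_eq_0:
  fixes z :: "'a :: idom"
  assumes "finite F"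
  shows "poly (\<Prod>t\<in>F. [:-t, 1:] ^ k t) z = 0 \<longleftrightarrow> z \<in> F \<and> k z \<noteq> 0"
  using assms by (auto simp: poly_prod prod_zero_iff poly_power)

lemma submodule_mult_poly:
  assumes S: "is_submodule theta u S" and x: "x \<in> S"
  shows "Fract q 1 * x \<in> S"
proof (induction q)
  case (pCons a p)
  have "Fract (pCons a p) 1 * x = const_rf a * x + hvar * (Fract p 1 * x)"
    by (simp add: Fract_pCons algebra_simps)
  thus ?case using S x pCons.IH unfolding is_submodule_def by auto
qed (use S in \<open>simp add: is_submodule_def Zero_fract_def[symmetric]\<close>)

lemma submodule_poly_generator:
  assumes S: "is_submodule theta u S" and nonzero: "S \<noteq> {0}"
  obtains g where "g \<noteq> 0" "Fract g 1 \<in> S" "\<And>p. Fract p 1 \<in> S \<Longrightarrow> g dvd p"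
proof -
  obtain x where x: "x \<in> S" "x \<noteq> 0"
    using S nonzero unfolding is_submodule_def by auto
  obtain a b where ab: "x = Fract a b" "b \<noteq> 0" by (cases x)
  have "Fract b 1 * x = Fract a 1" "a \<noteq> 0"
    using x ab by (simp_all add: eq_fract Zero_fract_def)
  hence "a \<noteq> 0 \<and> Fract a 1 \<in> S" using submodule_mult_poly[OF S x(1)] by metis
  then obtain g where g: "g \<noteq> 0" "Fract g 1 \<in> S"
    and minimal: "\<And>p. p \<noteq> 0 \<and> Fract p 1 \<in> S \<Longrightarrow> degree g \<le> degree p"
    using ex_has_least_nat[of "\<lambda>p. p \<noteq> 0 \<and> Fract p 1 \<in> S" a degree] by blast
  have "g dvd p" if p: "Fract p 1 \<in> S" for p
  proof -
    have "Fract (p mod g) 1 = Fract p 1 + const_rf (-1) * (Fract (p div g) 1 * Fract g 1)"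
      by (simp add: const_rf_def minus_div_mult_eq_mod[symmetric])
    hence "Fract (p mod g) 1 \<in> S"
      using S p submodule_mult_poly[OF S g(2)] unfolding is_submodule_def by simp
    hence "p mod g = 0" using minimal degree_mod_less[OF g(1), of p] by fastforce
    thus ?thesis by (simp add: mod_eq_0_iff_dvd)
  qed
  with g that show ?thesis by blast
qed

lemma submodule_e_step:
  assumes S: "is_submodule theta (Fract A B) S" and B: "B \<noteq> 0" and g: "Fract g 1 \<in> S"
  shows "Fract (pcompose g [:-2, 1:] * A) 1 \<in> S"
proof -
  have "e_act (Fract A B) (Fract g 1) \<in> S" using S g unfolding is_submodule_def by auto
  hence "Fract B 1 * e_act (Fract A B) (Fract g 1) \<in> S" by (rule submodule_mult_poly[OF S])
  moreover have "Fract B 1 * e_act (Fract A B) (Fract g 1) = Fract (pcompose g [:-2, 1:] * A) 1"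
    unfolding e_act_def sigma_def using B by (simp add: shift_Fract pcompose_1 eq_fract)
  ultimately show ?thesis by simp
qed

lemma submodule_f_step:
  assumes S: "is_submodule theta (Fract A B) S" and A: "A \<noteq> 0" and B: "B \<noteq> 0"
    and g: "Fract g 1 \<in> S"
  shows "Fract (([:theta:] - [:1, 1:]\<^sup>2) * pcompose g [:2, 1:] * pcompose B [:2, 1:]) 1 \<in> S"
proof -
  define A' where "A' = pcompose A [:2, 1:]"
  have A': "A' \<noteq> 0" unfolding A'_def using pcompose_linear_nonzero[OF A] .
  have four: "(4 :: ratfun) \<noteq> 0"
    unfolding const_rf_numeral[symmetric] by (simp add: const_rf_def eq_fract Zero_fract_def)
  have "f_act theta (Fract A B) (Fract g 1) \<in> S" using S g unfolding is_submodule_def by auto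
  hence "const_rf 4 * (Fract A' 1 * f_act theta (Fract A B) (Fract g 1)) \<in> S"
    using S submodule_mult_poly[OF S] unfolding is_submodule_def by blast
  moreover have "const_rf 4 * (Fract A' 1 * f_act theta (Fract A B) (Fract g 1)) =
      Fract ([:theta:] - [:1, 1:]\<^sup>2) 1 * (Fract A' 1 *
        (Fract (pcompose g [:2, 1:]) 1 / Fract A' (pcompose B [:2, 1:])))"
    unfolding f_act_def sigma_inv_def const_rf_numeral Fract_casimir A'_def
    using B four by (simp add: shift_Fract pcompose_1 mult_ac)
  moreover have "\<dots> = Fract (([:theta:] - [:1, 1:]\<^sup>2) * pcompose g [:2, 1:] * pcompose B [:2, 1:]) 1"
    using A' by (simp add: eq_fract)
  ultimately show ?thesis by simp
qed

lemma root_with_extremal_Re: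
  fixes g :: "complex poly"
  assumes "g \<noteq> 0" "degree g \<noteq> 0"
  obtains z w where "poly g z = 0" "\<And>y. poly g y = 0 \<Longrightarrow> Re z \<le> Re y"
    "poly g w = 0" "\<And>y. poly g y = 0 \<Longrightarrow> Re y \<le> Re w"
proof -
  define Z where "Z = {z. poly g z = 0}"
  have "finite Z" using poly_roots_finite[OF assms(1)] by (simp add: Z_def)
  moreover have "Z \<noteq> {}"
    using fundamental_theorem_of_algebra[of g] assms(2) by (auto simp: Z_def constant_degree)
  ultimately obtain z w where z: "is_arg_min Re (\<lambda>x. x \<in> Z) z"
    and w: "is_arg_min (\<lambda>x. - Re x) (\<lambda>x. x \<in> Z) w"
    using ex_is_arg_min_if_finite by metis
  show ?thesis
  proof (rule that)
    show "poly g z = 0" "poly g w = 0" using z w by (simp_all add: is_arg_min_def Z_def)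
    show "Re z \<le> Re y" "Re y \<le> Re w" if "poly g y = 0" for y
      using z w that by (simp_all add: is_arg_min_linorder Z_def)
  qed
qed

lemma degree_eq_0_by_extremal_roots:
  fixes g A B \<phi> :: "complex poly" and \<omega> :: real
  assumes g: "g \<noteq> 0"
    and e_roots: "\<And>z. poly g z = 0 \<Longrightarrow> poly (pcompose g [:-2, 1:] * A) z = 0"
    and f_roots: "\<And>z. poly g z = 0 \<Longrightarrow> poly (\<phi> * pcompose g [:2, 1:] * pcompose B [:2, 1:]) z = 0"
    and A_roots: "\<And>z. poly A z = 0 \<Longrightarrow> \<omega> \<le> Re z"
    and B_roots: "\<And>z. poly B z = 0 \<Longrightarrow> Re z < \<omega> + 2"
    and \<phi>_roots: "\<And>z. poly \<phi> z = 0 \<Longrightarrow> Re z < \<omega>"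
  shows "degree g = 0"
proof (rule ccontr)
  assume "degree g \<noteq> 0"
  then obtain z w where z: "poly g z = 0" "\<And>y. poly g y = 0 \<Longrightarrow> Re z \<le> Re y"
    and w: "poly g w = 0" "\<And>y. poly g y = 0 \<Longrightarrow> Re y \<le> Re w"
    using root_with_extremal_Re[OF g] by metis
  have "poly g (z - 2) \<noteq> 0" using z(2)[of "z - 2"] by auto
  hence "poly A z = 0" using e_roots[OF z(1)] by (simp add: poly_pcompose)
  hence "\<omega> \<le> Re z" by (rule A_roots)
  moreover have "poly g (w + 2) \<noteq> 0" using w(2)[of "w + 2"] by auto
  hence "poly \<phi> w = 0 \<or> poly B (w + 2) = 0"
    using f_roots[OF w(1)] by (simp add: poly_pcompose add.commute)
  hence "Re w < \<omega>" using \<phi>_roots B_roots by force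
  ultimately show False using z(2)[OF w(1)] by simp
qed

lemma one_mem_nonzero_submodule:
  fixes \<omega> :: real
  assumes S: "is_submodule theta (Fract A B) S" and nonzero: "S \<noteq> {0}"
    and A: "A \<noteq> 0" and B: "B \<noteq> 0"
    and A_roots: "\<And>z. poly A z = 0 \<Longrightarrow> \<omega> \<le> Re z"
    and B_roots: "\<And>z. poly B z = 0 \<Longrightarrow> Re z < \<omega> + 2"
    and casimir_roots: "\<And>z. theta = (z + 1)\<^sup>2 \<Longrightarrow> Re z < \<omega>"
  shows "1 \<in> S"
proof -
  obtain g where g: "g \<noteq> 0" "Fract g 1 \<in> S" and dvd: "\<And>p. Fract p 1 \<in> S \<Longrightarrow> g dvd p"
    using submodule_poly_generator[OF S nonzero] by blast
  have root: "poly p z = 0" if "Fract p 1 \<in> S" "poly g z = 0" for p z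
    using dvd[OF that(1)] that(2) by (auto elim: dvdE)
  have "degree g = 0"
  proof (rule degree_eq_0_by_extremal_roots[OF g(1) _ _ A_roots B_roots])
    show "poly ([:theta:] - [:1, 1:]\<^sup>2) z = 0 \<Longrightarrow> Re z < \<omega>" for z
      using casimir_roots by (simp add: add.commute)
  qed (use root submodule_e_step[OF S B g(2)] submodule_f_step[OF S A B g(2)] in blast)+
  then obtain k where k: "g = [:k:]" by (metis degree_eq_zeroE)
  hence "const_rf (1 / k) * Fract g 1 = 1"
    using g(1) by (simp add: const_rf_def One_fract_def one_pCons)
  thus ?thesis using S g(2) unfolding is_submodule_def by metis
qed

lemma simple_submodule_if_one_mem:
  assumes one: "\<And>S. is_submodule theta u S \<Longrightarrow> S \<noteq> {0} \<Longrightarrow> 1 \<in> S"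
  shows "(\<exists>L. is_simple_submodule theta u L) \<and>
         (\<forall>L. is_simple_submodule theta u L \<longrightarrow> range poly_to_ratfun \<subseteq> L)"
proof
  define L where "L = \<Inter>{S. is_submodule theta u S \<and> 1 \<in> S}"
  have L: "is_submodule theta u L" "1 \<in> L"
    unfolding L_def is_submodule_def by auto
  have "T = {0} \<or> T = L" if "is_submodule theta u T" "T \<subseteq> L" for T
    using that one unfolding L_def by blast
  with L show "\<exists>L. is_simple_submodule theta u L"
    unfolding is_simple_submodule_def by (metis singletonD zero_neq_one)
  show "\<forall>L. is_simple_submodule theta u L \<longrightarrow> range poly_to_ratfun \<subseteq> L"
  proof (intro allI impI subsetI)
    fix L y assume L: "is_simple_submodule theta u L" and "y \<in> range poly_to_ratfun"
    then obtain p where "y = Fract p 1" by (auto simp: poly_to_ratfun_def)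
    moreover have "1 \<in> L" using one L by (simp add: is_simple_submodule_def)
    ultimately show "y \<in> L"
      using L submodule_mult_poly[of theta u L 1 p] by (simp add: is_simple_submodule_def)
  qed
qed

theorem proposition8:
  fixes theta r1 r2 c :: complex and m :: "complex \<Rightarrow> int" and \<omega> :: real and u :: ratfun
  assumes roots: "\<forall>z. theta - (z + 1)^2 = - ((z - r1) * (z - r2))"
    and omega: "\<omega> = 3 + max (Re r1) (Re r2)"
    and c_nz: "c \<noteq> 0"
    and m_fin: "finite {t. m t \<noteq> 0}"
    and m_supp: "\<forall>t. m t \<noteq> 0 \<longrightarrow> \<omega> \<le> Re t \<and> Re t < \<omega> + 2"
    and u_def: "u = const_rf c * (\<Prod>t\<in>{t. m t \<noteq> 0}. (hvar - const_rf t) powi (m t))"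
  shows "(\<exists>L. is_simple_submodule theta u L) \<and>
         (\<forall>L. is_simple_submodule theta u L \<longrightarrow> range poly_to_ratfun \<subseteq> L)"
proof (rule simple_submodule_if_one_mem)
  define F where "F = {t. m t \<noteq> 0}"
  define A where "A = [:c:] * (\<Prod>t\<in>F. [:-t, 1:] ^ nat (m t))"
  define B where "B = (\<Prod>t\<in>F. [:-t, 1:] ^ nat (- m t))"
  have F: "finite F" using m_fin by (simp add: F_def)
  have strip: "\<omega> \<le> Re t \<and> Re t < \<omega> + 2" if "t \<in> F" for t
    using that m_supp by (simp add: F_def)
  have u: "u = Fract A B"
    unfolding u_def F_def[symmetric] prod_linear_factor_powi[OF F] A_def B_def
    by (simp add: const_rf_def)
  fix S assume S: "is_submodule theta u S" "S \<noteq> {0}"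
  show "1 \<in> S"
  proof (rule one_mem_nonzero_submodule)
    show "is_submodule theta (Fract A B) S" using S(1) u by simp
    show "A \<noteq> 0" "B \<noteq> 0"
      using F c_nz by (simp_all add: A_def B_def prod_zero_iff)
    show "\<omega> \<le> Re z" if "poly A z = 0" for z
      using that c_nz strip by (simp add: A_def poly_prod_linear_factors_eq_0[OF F])
    show "Re z < \<omega> + 2" if "poly B z = 0" for z
      using that strip by (simp add: B_def poly_prod_linear_factors_eq_0[OF F])
    show "Re z < \<omega>" if "theta = (z + 1)\<^sup>2" for z
      using that roots[rule_format, of z] omega by auto
  qed (rule S(2))
qed

end
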